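(* Let $k\ge 1$ and let $F(x)=\sum_{i=1}^k\alpha_i\,\sigma\!\left(\frac{x-\mu_i}{s_i}\right)$ be the cdf of a $k$-component mixture of logistics distribution, where $\sigma(t)=1/(1+e^{-t})$, $\alpha_i>0$ with $\sum_i\alpha_i=1$, $\mu_i\in\mathbb{R}$, $s_i>0$. Then there exist parameters $\theta$ of a two-layer PNN with hidden dimension $k$ such that, writing $N^{[A,B]}_\theta$ for the normalized PNN cdf with support bounds $[A,B]$, $$\sup_{x\in[A,B]}\bigl|N^{[A,B]}_\theta(x)-F(x)\bigr|\longrightarrow 0\quad\text{as } A\to-\infty,\ B\to\infty.$$
   Context: Let $\sigma(t)=1/(1+e^{-t})$. A two-layer PNN with hidden dimension $k$ is the function $F_\theta(x)=\sum_{i=1}^k\beta_i\,\sigma(w_i x+c_i)$ of $x\in\mathbb{R}$, with parameters $\theta$ consisting of $w_i>0$, $c_i\in\mathbb{R}$, and a probability vector $(\beta_1,\dots,\beta_k)$ with all $\beta_i>0$ (in the paper the positivity constraints are enforced by reparametrizing $w_i=e^{-A_i}$, $c_i=-e^{-A_i}b_i$ and $\beta=\mathrm{softmax}(\cdot)$). Given support bounds $A<B$, the normalized PNN cdf is $N^{[A,B]}_\theta(x)=\frac{F_\theta(x)-F_\theta(A)}{F_\theta(B)-F_\theta(A)}$ for $x\in[A,B]$. *)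

theory Defs
  imports "HOL-Analysis.Analysis"
begin

definition sigmoid :: "real \<Rightarrow> real" where
  "sigmoid t = 1 / (1 + exp (- t))"

definition mix_logistic_cdf :: "nat \<Rightarrow> (nat \<Rightarrow> real) \<Rightarrow> (nat \<Rightarrow> real) \<Rightarrow> (nat \<Rightarrow> real) \<Rightarrow> real \<Rightarrow> real" where
  "mix_logistic_cdf k \<alpha> \<mu> s x = (\<Sum>i<k. \<alpha> i * sigmoid ((x - \<mu> i) / s i))"

definition pnn :: "nat \<Rightarrow> (nat \<Rightarrow> real) \<Rightarrow> (nat \<Rightarrow> real) \<Rightarrow> (nat \<Rightarrow> real) \<Rightarrow> real \<Rightarrow> real" where
  "pnn k w c \<beta> x = (\<Sum>i<k. \<beta> i * sigmoid (w i * x + c i))"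

definition pnn_norm :: "nat \<Rightarrow> (nat \<Rightarrow> real) \<Rightarrow> (nat \<Rightarrow> real) \<Rightarrow> (nat \<Rightarrow> real) \<Rightarrow> real \<Rightarrow> real \<Rightarrow> real \<Rightarrow> real" where
  "pnn_norm k w c \<beta> A B x = (pnn k w c \<beta> x - pnn k w c \<beta> A) / (pnn k w c \<beta> B - pnn k w c \<beta> A)"

end

theory Submission
  imports Defs "HOL-Real_Asymp.Real_Asymp"
begin

text \<open>With \<open>w i = 1 / s i\<close>, \<open>c i = - \<mu> i / s i\<close> and \<open>\<beta> = \<alpha>\<close> the PNN is exactly the mixture
  cdf \<open>F\<close>. The normalized network \<open>(F x - F A) / (F B - F A)\<close> then differs from \<open>F x\<close> by at most
  \<open>(\<bar>1 - (F B - F A)\<bar> + F A) / (F B - F A)\<close> on \<open>[A, B]\<close>, uniformly in \<open>x\<close> because \<open>0 \<le> F \<le> 1\<close>,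
  and this bound tends to \<open>0\<close> since \<open>F A \<rightarrow> 0\<close> and \<open>F B \<rightarrow> 1\<close>.\<close>

lemma sigmoid_pos: "0 < sigmoid t"
  unfolding sigmoid_def by (simp add: add_pos_pos)

lemma sigmoid_le_1: "sigmoid t \<le> 1"
  unfolding sigmoid_def by (simp add: divide_le_eq_1 add_pos_pos)

lemma tendsto_sigmoid_at_bot: "(sigmoid \<longlongrightarrow> 0) at_bot"
  unfolding sigmoid_def by real_asymp

lemma tendsto_sigmoid_at_top: "(sigmoid \<longlongrightarrow> 1) at_top"
  unfolding sigmoid_def by real_asymp

lemma filterlim_shift_scale_at_bot:
  fixes s :: real
  assumes "s > 0"
  shows "filterlim (\<lambda>x. (x - m) / s) at_bot at_bot"
  using assms by real_asymp

lemma filterlim_shift_scale_at_top: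
  fixes s :: real
  assumes "s > 0"
  shows "filterlim (\<lambda>x. (x - m) / s) at_top at_top"
  using assms by real_asymp

lemma pnn_rescaled_eq_mix_logistic_cdf:
  assumes "\<forall>i<k. s i > 0"
  shows "pnn k (\<lambda>i. 1 / s i) (\<lambda>i. - \<mu> i / s i) \<alpha> x = mix_logistic_cdf k \<alpha> \<mu> s x"
  unfolding pnn_def mix_logistic_cdf_def
proof (rule sum.cong)
  fix i assume "i \<in> {..<k}"
  with assms have "s i > 0"
    by simp
  then have "1 / s i * x + - \<mu> i / s i = (x - \<mu> i) / s i"
    by (simp add: field_simps)
  then show "\<alpha> i * sigmoid (1 / s i * x + - \<mu> i / s i) = \<alpha> i * sigmoid ((x - \<mu> i) / s i)"
    by simp
qed simp

lemma mix_logistic_cdf_nonneg: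
  assumes "\<forall>i<k. \<alpha> i > 0"
  shows "0 \<le> mix_logistic_cdf k \<alpha> \<mu> s x"
  unfolding mix_logistic_cdf_def using assms sigmoid_pos
  by (intro sum_nonneg) (simp add: less_imp_le)

lemma mix_logistic_cdf_le_1:
  assumes "\<forall>i<k. \<alpha> i > 0" and "(\<Sum>i<k. \<alpha> i) = 1"
  shows "mix_logistic_cdf k \<alpha> \<mu> s x \<le> 1"
proof -
  have "mix_logistic_cdf k \<alpha> \<mu> s x \<le> (\<Sum>i<k. \<alpha> i)"
    unfolding mix_logistic_cdf_def using assms(1) sigmoid_le_1
    by (intro sum_mono) (simp add: mult_left_le)
  with assms(2) show ?thesis by simp
qed

lemma tendsto_mix_logistic_cdf_at_bot:
  assumes "\<forall>i<k. s i > 0"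
  shows "(mix_logistic_cdf k \<alpha> \<mu> s \<longlongrightarrow> 0) at_bot"
proof -
  have "((\<lambda>x. \<Sum>i<k. \<alpha> i * sigmoid ((x - \<mu> i) / s i)) \<longlongrightarrow> (\<Sum>i<k. \<alpha> i * 0)) at_bot"
  proof (intro tendsto_sum tendsto_mult tendsto_const)
    fix i assume "i \<in> {..<k}"
    with assms have "filterlim (\<lambda>x. (x - \<mu> i) / s i) at_bot at_bot"
      by (simp add: filterlim_shift_scale_at_bot)
    then show "((\<lambda>x. sigmoid ((x - \<mu> i) / s i)) \<longlongrightarrow> 0) at_bot"
      by (rule filterlim_compose[OF tendsto_sigmoid_at_bot])
  qed
  then show ?thesis
    unfolding mix_logistic_cdf_def by simp
qed

lemma tendsto_mix_logistic_cdf_at_top: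
  assumes "\<forall>i<k. s i > 0" and "(\<Sum>i<k. \<alpha> i) = 1"
  shows "(mix_logistic_cdf k \<alpha> \<mu> s \<longlongrightarrow> 1) at_top"
proof -
  have "((\<lambda>x. \<Sum>i<k. \<alpha> i * sigmoid ((x - \<mu> i) / s i)) \<longlongrightarrow> (\<Sum>i<k. \<alpha> i * 1)) at_top"
  proof (intro tendsto_sum tendsto_mult tendsto_const)
    fix i assume "i \<in> {..<k}"
    with assms have "filterlim (\<lambda>x. (x - \<mu> i) / s i) at_top at_top"
      by (simp add: filterlim_shift_scale_at_top)
    then show "((\<lambda>x. sigmoid ((x - \<mu> i) / s i)) \<longlongrightarrow> 1) at_top"
      by (rule filterlim_compose[OF tendsto_sigmoid_at_top])
  qed
  with assms(2) show ?thesis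
    unfolding mix_logistic_cdf_def by simp
qed

lemma normalized_diff_bound:
  fixes F :: "real \<Rightarrow> real"
  assumes "\<bar>F x\<bar> \<le> M" and "F B - F A > 0"
  shows "\<bar>(F x - F A) / (F B - F A) - F x\<bar>
           \<le> (M * \<bar>1 - (F B - F A)\<bar> + \<bar>F A\<bar>) / (F B - F A)"
proof -
  let ?D = "F B - F A"
  have "(F x - F A) / ?D - F x = (F x * (1 - ?D) - F A) / ?D"
    using assms(2) by (simp add: field_simps)
  then have "\<bar>(F x - F A) / ?D - F x\<bar> = \<bar>F x * (1 - ?D) - F A\<bar> / ?D"
    using assms(2) by simp
  also have "\<dots> \<le> (M * \<bar>1 - ?D\<bar> + \<bar>F A\<bar>) / ?D"
  proof (rule divide_right_mono)
    have "\<bar>F x * (1 - ?D)\<bar> \<le> M * \<bar>1 - ?D\<bar>"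
      using assms(1) by (simp add: abs_mult mult_right_mono)
    then show "\<bar>F x * (1 - ?D) - F A\<bar> \<le> M * \<bar>1 - ?D\<bar> + \<bar>F A\<bar>"
      by linarith
  qed (use assms(2) in simp)
  finally show ?thesis .
qed

lemma tendsto_sup_normalized_diff:
  fixes F :: "real \<Rightarrow> real"
  assumes bounded: "\<And>x. \<bar>F x\<bar> \<le> M"
    and F_bot: "(F \<longlongrightarrow> 0) at_bot" and F_top: "(F \<longlongrightarrow> 1) at_top"
  shows "((\<lambda>(A, B). SUP x\<in>{A..B}. \<bar>(F x - F A) / (F B - F A) - F x\<bar>) \<longlongrightarrow> 0)
           (at_bot \<times>\<^sub>F at_top)"
proof -
  let ?P = "at_bot \<times>\<^sub>F at_top :: (real \<times> real) filter"
  let ?S = "\<lambda>(A, B). SUP x\<in>{A..B}. \<bar>(F x - F A) / (F B - F A) - F x\<bar>"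
  define g where "g = (\<lambda>(A, B). (M * \<bar>1 - (F B - F A)\<bar> + \<bar>F A\<bar>) / (F B - F A))"
  have FA: "((\<lambda>p. F (fst p)) \<longlongrightarrow> 0) ?P"
    using filterlim_compose[OF F_bot filterlim_fst] .
  have FB: "((\<lambda>p. F (snd p)) \<longlongrightarrow> 1) ?P"
    using filterlim_compose[OF F_top filterlim_snd] .
  have "((\<lambda>p. g p) \<longlongrightarrow> (M * \<bar>1 - (1 - 0)\<bar> + \<bar>0\<bar>) / (1 - 0)) ?P"
    unfolding g_def case_prod_beta by (intro tendsto_intros FA FB) simp
  then have g_tendsto: "(g \<longlongrightarrow> 0) ?P"
    by simp
  have "eventually (\<lambda>p. F (snd p) - F (fst p) > 0) ?P"
    using tendsto_diff[OF FB FA] by (rule order_tendstoD) simp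
  moreover have "eventually (\<lambda>p. fst p \<le> 0) ?P"
    using filterlim_at_bot filterlim_fst by blast
  moreover have "eventually (\<lambda>p. 0 \<le> snd p) ?P"
    using filterlim_at_top filterlim_snd by blast
  ultimately have "eventually (\<lambda>p. 0 \<le> ?S p \<and> ?S p \<le> g p) ?P"
  proof eventually_elim
    case (elim p)
    obtain A B where p: "p = (A, B)"
      by (cases p)
    from elim have D: "F B - F A > 0" and AB: "A \<le> B"
      by (auto simp: p)
    have bound: "\<bar>(F x - F A) / (F B - F A) - F x\<bar> \<le> g p" for x
      using normalized_diff_bound[of F x M B A, OF bounded D] by (simp add: g_def p)
    then have "bdd_above ((\<lambda>x. \<bar>(F x - F A) / (F B - F A) - F x\<bar>) ` {A..B})"
      by (intro bdd_aboveI2) blast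
    then have "\<bar>(F A - F A) / (F B - F A) - F A\<bar>
                 \<le> (SUP x\<in>{A..B}. \<bar>(F x - F A) / (F B - F A) - F x\<bar>)"
      using AB by (intro cSUP_upper) auto
    moreover have "(SUP x\<in>{A..B}. \<bar>(F x - F A) / (F B - F A) - F x\<bar>) \<le> g p"
      using bound AB by (simp add: cSUP_least)
    ultimately show ?case
      by (simp add: p)
  qed
  then show ?thesis
    by (intro tendsto_sandwich[OF _ _ tendsto_const g_tendsto]) (auto elim: eventually_mono)
qed

theorem lemma4:
  fixes k :: nat and \<alpha> \<mu> s :: "nat \<Rightarrow> real"
  assumes "k \<ge> 1"
    and "\<forall>i<k. \<alpha> i > 0" and "(\<Sum>i<k. \<alpha> i) = 1"
    and "\<forall>i<k. s i > 0"
  shows "\<exists>w c \<beta> :: nat \<Rightarrow> real.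
           (\<forall>i<k. w i > 0) \<and> (\<forall>i<k. \<beta> i > 0) \<and> (\<Sum>i<k. \<beta> i) = 1 \<and>
           ((\<lambda>(A, B). SUP x\<in>{A..B}. \<bar>pnn_norm k w c \<beta> A B x - mix_logistic_cdf k \<alpha> \<mu> s x\<bar>)
              \<longlongrightarrow> 0) (at_bot \<times>\<^sub>F at_top)"
proof (intro exI conjI)
  let ?F = "mix_logistic_cdf k \<alpha> \<mu> s"
  show "\<forall>i<k. 1 / s i > 0"
    using assms(4) by simp
  show "\<forall>i<k. \<alpha> i > 0" and "(\<Sum>i<k. \<alpha> i) = 1"
    by fact+
  have "\<bar>?F x\<bar> \<le> 1" for x
    using mix_logistic_cdf_nonneg[OF assms(2)] mix_logistic_cdf_le_1[OF assms(2,3)] by simp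
  from tendsto_sup_normalized_diff[OF this tendsto_mix_logistic_cdf_at_bot[OF assms(4)]
      tendsto_mix_logistic_cdf_at_top[OF assms(4,3)]]
  show "((\<lambda>(A, B). SUP x\<in>{A..B}.
           \<bar>pnn_norm k (\<lambda>i. 1 / s i) (\<lambda>i. - \<mu> i / s i) \<alpha> A B x - ?F x\<bar>) \<longlongrightarrow> 0)
          (at_bot \<times>\<^sub>F at_top)"
    unfolding pnn_norm_def pnn_rescaled_eq_mix_logistic_cdf[OF assms(4)] .
qed

end
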